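(* Assume the setting of the context, with $\rho_\varphi=-\mathbf B\cdot\nabla\varphi$ nowhere zero. For a smooth function $h(t,\mathbf x)$ define the vector field on $\mathbb R\times D$ $$U=\rho_\varphi^{-1}\Big[-B(h)\,(\partial_t+v)+\frac{dh}{dt}\,\mathbf B\cdot\nabla+(\nabla\varphi\times\nabla h)\cdot\nabla\Big],$$ where $B(h)=\mathbf B\cdot\nabla h$ and $dh/dt=\partial_t h+\mathbf v\cdot\nabla h$. Then: (a) $i(U)\Omega=dh$ for every smooth $h$, so $U$ is a Hamiltonian vector field of $\Omega$ with Hamiltonian $h$; also $i(\rho_\varphi^{-1}\mathbf B\cdot\nabla)\Omega=dt$, and $\rho_\varphi^{-1}\mathbf B\cdot\nabla$ is a symmetry of $\partial_t+v$. (b) If $h$ is conserved, i.e. $dh/dt=0$, then $U$ is an infinitesimal symmetry of $\partial_t+v$. (c) In that case, setting $W_0=\rho_\varphi^{-1}\mathbf B\cdot\nabla$ and $W_n=[W_{n-1},U]$ for $n\ge1$ (so $W_n=[\dots[[\rho_\varphi^{-1}B,U],U],\dots,U]$), every $W_n$ is a Hamiltonian vector field of $\Omega$ (so $\mathcal L_{W_n}\Omega=0$) and an infinitesimal symmetry of $\partial_t+v$.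
   Context: Setting: $D\subset\mathbb R^3$ is a simply connected open domain; $\mathbf v(t,\mathbf x)$ is a smooth divergence-free time-dependent vector field on $D$, $v=\mathbf v\cdot\nabla$, and $\partial_t+v$ is its suspension on $\mathbb R\times D$. $\mathbf B$ is a smooth divergence-free field with $\partial_t\mathbf B-\nabla\times(\mathbf v\times\mathbf B)=0$ and $\varphi$ is a smooth function with $\partial_t\varphi+\mathbf v\cdot\nabla\varphi=0$. $\Omega=-(\nabla\varphi+\mathbf v\times\mathbf B)\cdot d\mathbf x\wedge dt+\mathbf B\cdot(d\mathbf x\wedge d\mathbf x)$, where $\mathbf a\cdot d\mathbf x\wedge dt=\sum_i a_i\,dx^i\wedge dt$ and $\mathbf a\cdot(d\mathbf x\wedge d\mathbf x)=a_1\,dy\wedge dz+a_2\,dz\wedge dx+a_3\,dx\wedge dy$. A vector field $X$ is Hamiltonian for $\Omega$ with Hamiltonian $f$ if $i(X)\Omega=df$. A time-dependent vector field $U=\xi\partial_t+u$ on $\mathbb R\times D$ ($u$ having no $\partial_t$ component) is an infinitesimal symmetry of $\partial_t+v$ if $[\partial_t+v,\ \xi\partial_t+u]=(\xi_{,t}+v(\xi))(\partial_t+v)$. *)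

theory Defs
  imports "HOL-Analysis.Analysis"
begin

text \<open>Space-time points are pairs (t, x) with t real and x in R^3.
  A tangent vector at a point is a pair (a, alpha): a is the d/dt component,
  alpha the spatial component.\<close>

type_synonym pt = "real \<times> (real^3)"

fun Ck_on :: "nat \<Rightarrow> 'a::euclidean_space set \<Rightarrow> ('a \<Rightarrow> 'b::euclidean_space) \<Rightarrow> bool" where
  "Ck_on 0 S f = continuous_on S f"
| "Ck_on (Suc k) S f = (f differentiable_on S \<and>
      (\<forall>w. Ck_on k S (\<lambda>p. frechet_derivative f (at p) w)))"

definition smooth_on :: "'a::euclidean_space set \<Rightarrow> ('a \<Rightarrow> 'b::euclidean_space) \<Rightarrow> bool" where
  "smooth_on S f \<longleftrightarrow> (\<forall>k. Ck_on k S f)"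

definition dt :: "(pt \<Rightarrow> 'b::real_normed_vector) \<Rightarrow> pt \<Rightarrow> 'b" where
  "dt f p = frechet_derivative f (at p) (1, 0)"

definition dx :: "3 \<Rightarrow> (pt \<Rightarrow> 'b::real_normed_vector) \<Rightarrow> pt \<Rightarrow> 'b" where
  "dx i f p = frechet_derivative f (at p) (0, axis i 1)"

definition grad :: "(pt \<Rightarrow> real) \<Rightarrow> pt \<Rightarrow> real^3" where
  "grad f p = (\<chi> i. dx i f p)"

definition divg :: "(pt \<Rightarrow> real^3) \<Rightarrow> pt \<Rightarrow> real" where
  "divg F p = (\<Sum>i\<in>UNIV. dx i F p $ i)"

definition curl :: "(pt \<Rightarrow> real^3) \<Rightarrow> pt \<Rightarrow> real^3" where
  "curl F p = vector [dx 2 F p $ 3 - dx 3 F p $ 2,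
                      dx 3 F p $ 1 - dx 1 F p $ 3,
                      dx 1 F p $ 2 - dx 2 F p $ 1]"

text \<open>A vector field acting on a function (directional derivative), and the Lie bracket
  [X,Y] with the convention [X,Y] f = X(Y f) - Y(X f).\<close>
definition vf_apply :: "(pt \<Rightarrow> pt) \<Rightarrow> (pt \<Rightarrow> 'b::real_normed_vector) \<Rightarrow> pt \<Rightarrow> 'b" where
  "vf_apply X f p = frechet_derivative f (at p) (X p)"

definition lie :: "(pt \<Rightarrow> pt) \<Rightarrow> (pt \<Rightarrow> pt) \<Rightarrow> pt \<Rightarrow> pt" where
  "lie X Y p = frechet_derivative Y (at p) (X p) - frechet_derivative X (at p) (Y p)"

definition suspension :: "(pt \<Rightarrow> real^3) \<Rightarrow> pt \<Rightarrow> pt" where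
  "suspension v p = (1, v p)"

definition inf_symmetry :: "pt set \<Rightarrow> (pt \<Rightarrow> real^3) \<Rightarrow> (pt \<Rightarrow> pt) \<Rightarrow> bool" where
  "inf_symmetry M v U \<longleftrightarrow>
     (\<forall>p\<in>M. lie (suspension v) U p =
        vf_apply (suspension v) (\<lambda>q. fst (U q)) p *\<^sub>R suspension v p)"

text \<open>2-forms on R x R^3 are given pointwise as bilinear maps on tangent vectors.
  The form Omega = -(grad phi + v x B).(dx wedge dt) + B.(dx wedge dx):
  for tangent vectors (a,alpha), (b,beta):
  (dx^i wedge dt) ((a,alpha),(b,beta)) = alpha_i b - beta_i a and
  B.(dx wedge dx)(alpha,beta) = B.(alpha x beta).\<close>
definition Omega :: "(pt \<Rightarrow> real) \<Rightarrow> (pt \<Rightarrow> real^3) \<Rightarrow> (pt \<Rightarrow> real^3) \<Rightarrow> pt \<Rightarrow> pt \<Rightarrow> pt \<Rightarrow> real" where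
  "Omega \<phi> v B p X Y =
     (let E = grad \<phi> p + cross3 (v p) (B p) in
       - (E \<bullet> snd X * fst Y - E \<bullet> snd Y * fst X) + B p \<bullet> cross3 (snd X) (snd Y))"

definition hamiltonian_with :: "pt set \<Rightarrow> (pt \<Rightarrow> pt \<Rightarrow> pt \<Rightarrow> real) \<Rightarrow> (pt \<Rightarrow> pt) \<Rightarrow> (pt \<Rightarrow> real) \<Rightarrow> bool" where
  "hamiltonian_with M Om X f \<longleftrightarrow> (\<forall>p\<in>M. \<forall>w. Om p (X p) w = frechet_derivative f (at p) w)"

definition hamiltonian_vf :: "pt set \<Rightarrow> (pt \<Rightarrow> pt \<Rightarrow> pt \<Rightarrow> real) \<Rightarrow> (pt \<Rightarrow> pt) \<Rightarrow> bool" where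
  "hamiltonian_vf M Om X \<longleftrightarrow> (\<exists>f. smooth_on M f \<and> hamiltonian_with M Om X f)"

text \<open>Lie derivative of a 2-form along X, evaluated on constant vector fields v, w:
  (L_X Om)_p(v,w) = X(Om(v,w))(p) + Om_p(DX_p v, w) + Om_p(v, DX_p w).\<close>
definition lie_deriv2 :: "(pt \<Rightarrow> pt) \<Rightarrow> (pt \<Rightarrow> pt \<Rightarrow> pt \<Rightarrow> real) \<Rightarrow> pt \<Rightarrow> pt \<Rightarrow> pt \<Rightarrow> real" where
  "lie_deriv2 X Om p v w =
     frechet_derivative (\<lambda>q. Om q v w) (at p) (X p)
     + Om p (frechet_derivative X (at p) v) w + Om p v (frechet_derivative X (at p) w)"

definition U_field :: "(pt \<Rightarrow> real) \<Rightarrow> (pt \<Rightarrow> real^3) \<Rightarrow> (pt \<Rightarrow> real^3) \<Rightarrow> (pt \<Rightarrow> real) \<Rightarrow> pt \<Rightarrow> pt" where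
  "U_field \<phi> v B h p =
     (let \<rho> = - (B p \<bullet> grad \<phi> p);
          Bh = B p \<bullet> grad h p;
          dh = dt h p + v p \<bullet> grad h p
      in inverse \<rho> *\<^sub>R ((- Bh) *\<^sub>R suspension v p + dh *\<^sub>R (0, B p)
                          + (0, cross3 (grad \<phi> p) (grad h p))))"

primrec W_seq :: "(pt \<Rightarrow> pt) \<Rightarrow> (pt \<Rightarrow> pt) \<Rightarrow> nat \<Rightarrow> pt \<Rightarrow> pt" where
  "W_seq W0 U 0 = W0"
| "W_seq W0 U (Suc n) = lie (W_seq W0 U n) U"

end

theory Submission
  imports Defs
begin

text \<open>The 2-form \<open>\<Omega> = -E\<cdot>dx\<and>dt + B\<cdot>(dx\<and>dx)\<close> with \<open>E = \<nabla>\<phi> + v \<times> B\<close> is closed: \<open>div B = 0\<close>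
  and \<open>\<partial>\<^sub>t B = curl (v \<times> B) = curl E\<close>. Contracting \<open>\<Omega>\<close> with \<open>U\<close>, resp. \<open>\<rho>\<^sup>-\<^sup>1 B\<close>, is
  linear algebra and gives \<open>dh\<close>, resp. \<open>dt\<close>. Since \<open>\<Omega>\<close> is closed, Cartan's formula shows that
  Hamiltonian fields preserve \<open>\<Omega>\<close> and that \<open>i([X,Y]) \<Omega> = d(X g)\<close> when \<open>i(Y) \<Omega> = dg\<close>; hence all
  brackets \<open>W\<^sub>n\<close> are Hamiltonian.

  For the symmetries: \<open>B\<close> is frozen into the flow by the induction equation, gradients of
  conserved functions are transported as covectors, so \<open>\<nabla>\<phi> \<times> \<nabla>h\<close> is frozen in as well (\<open>v\<close> is
  divergence-free), and \<open>\<rho> = -B\<cdot>\<nabla>\<phi>\<close> is conserved. Thus \<open>\<rho>\<^sup>-\<^sup>1 B\<close> and the spatial part of \<open>U\<close>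
  commute with \<open>\<partial>\<^sub>t + v\<close>, while the rest of \<open>U\<close> is a multiple of \<open>\<partial>\<^sub>t + v\<close>. By the Jacobi
  identity, brackets of symmetries are symmetries.\<close>

abbreviation FD :: "('a::real_normed_vector \<Rightarrow> 'b::real_normed_vector) \<Rightarrow> 'a \<Rightarrow> 'a \<Rightarrow> 'b" where
  "FD f p \<equiv> frechet_derivative f (at p)"

lemma has_derivative_FD: "f differentiable (at p) \<Longrightarrow> (f has_derivative FD f p) (at p)"
  using frechet_derivative_works by blast

lemma FD_eqI: "(f has_derivative f') (at p) \<Longrightarrow> FD f p = f'"
  by (metis frechet_derivative_at)

lemma linear_FD: "f differentiable (at p) \<Longrightarrow> linear (FD f p)"
  using has_derivative_FD has_derivative_linear by blast

lemma FD_cong_open: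
  assumes "open S" "p \<in> S" "\<And>x. x \<in> S \<Longrightarrow> f x = g x"
  shows "FD f p = FD g p"
proof -
  have "(f has_derivative f') (at p) \<longleftrightarrow> (g has_derivative f') (at p)" for f'
    using has_derivative_transform_within_open[OF _ assms(1,2)] assms(3) by metis
  then show ?thesis unfolding frechet_derivative_def by simp
qed

lemma FD_const: "FD (\<lambda>x. c) p = (\<lambda>w. 0)"
  by (rule FD_eqI) simp

lemma FD_bounded_linear: "bounded_linear L \<Longrightarrow> FD L p = L"
  by (rule FD_eqI) (simp add: bounded_linear_imp_has_derivative)

lemma FD_add: "f differentiable (at p) \<Longrightarrow> g differentiable (at p) \<Longrightarrow>
    FD (\<lambda>x. f x + g x) p w = FD f p w + FD g p w"
  by (subst FD_eqI[OF has_derivative_add[OF has_derivative_FD has_derivative_FD]]) auto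

lemma FD_diff: "f differentiable (at p) \<Longrightarrow> g differentiable (at p) \<Longrightarrow>
    FD (\<lambda>x. f x - g x) p w = FD f p w - FD g p w"
  by (subst FD_eqI[OF has_derivative_diff[OF has_derivative_FD has_derivative_FD]]) auto

lemma FD_sum: "finite A \<Longrightarrow> (\<And>i. i \<in> A \<Longrightarrow> f i differentiable (at p)) \<Longrightarrow>
    FD (\<lambda>x. \<Sum>i\<in>A. f i x) p w = (\<Sum>i\<in>A. FD (f i) p w)"
  by (subst FD_eqI[OF has_derivative_sum[OF has_derivative_FD]]) auto

lemma FD_bounded_linear_compose: "bounded_linear L \<Longrightarrow> f differentiable (at p) \<Longrightarrow>
    FD (\<lambda>x. L (f x)) p w = L (FD f p w)"
  by (subst FD_eqI[OF bounded_linear.has_derivative[OF _ has_derivative_FD]]) auto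

lemma FD_bounded_bilinear: "bounded_bilinear P \<Longrightarrow> f differentiable (at p) \<Longrightarrow>
    g differentiable (at p) \<Longrightarrow> FD (\<lambda>x. P (f x) (g x)) p w = P (f p) (FD g p w) + P (FD f p w) (g p)"
  by (subst FD_eqI[OF bounded_bilinear.FDERIV[OF _ has_derivative_FD has_derivative_FD]]) auto

lemma FD_inverse: "f differentiable (at p) \<Longrightarrow> f p \<noteq> (0::real) \<Longrightarrow>
    FD (\<lambda>x. inverse (f x)) p w = - (inverse (f p) * FD f p w * inverse (f p))"
  by (subst FD_eqI[OF Deriv.has_derivative_inverse[OF _ has_derivative_FD]]) auto

lemma FD_Pair: "f differentiable (at p) \<Longrightarrow> g differentiable (at p) \<Longrightarrow>
    FD (\<lambda>x. (f x, g x)) p w = (FD f p w, FD g p w)"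
  by (subst FD_eqI[OF has_derivative_Pair[OF has_derivative_FD has_derivative_FD]]) auto

lemma differentiable_bounded_linear_compose:
  "bounded_linear L \<Longrightarrow> f differentiable (at x) \<Longrightarrow> (\<lambda>x. L (f x)) differentiable (at x)"
  by (rule differentiable_compose[OF bounded_linear_imp_differentiable])

lemma differentiable_bounded_bilinear: "bounded_bilinear P \<Longrightarrow> f differentiable (at x) \<Longrightarrow>
    g differentiable (at x) \<Longrightarrow> (\<lambda>x. P (f x) (g x)) differentiable (at x)"
  using bounded_bilinear.FDERIV[OF _ has_derivative_FD has_derivative_FD] differentiable_def by blast

lemma FD_basis_expansion:
  fixes f :: "'a::euclidean_space \<Rightarrow> 'b::real_normed_vector"
  assumes "f differentiable (at p)"
  shows "FD f p w = (\<Sum>b\<in>Basis. (w \<bullet> b) *\<^sub>R FD f p b)"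
proof -
  have "FD f p w = FD f p (\<Sum>b\<in>Basis. (w \<bullet> b) *\<^sub>R b)" by (simp add: euclidean_representation)
  then show ?thesis using linear_FD[OF assms] by (simp add: linear_sum linear_cmul)
qed

lemma Ck_on_Suc_imp: "Ck_on (Suc k) S f \<Longrightarrow> Ck_on k S f"
  by (induction k arbitrary: f) (simp_all add: differentiable_imp_continuous_on)

lemma Ck_on_Suc_imp_differentiable:
  "open S \<Longrightarrow> Ck_on (Suc k) S f \<Longrightarrow> x \<in> S \<Longrightarrow> f differentiable (at x)"
  by (simp add: differentiable_on_eq_differentiable_at)

lemma Ck_on_cong:
  "open S \<Longrightarrow> Ck_on k S f \<Longrightarrow> (\<And>x. x \<in> S \<Longrightarrow> f x = g x) \<Longrightarrow> Ck_on k S g"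
proof (induction k arbitrary: f g)
  case 0
  then show ?case by (simp cong: continuous_on_cong)
next
  case (Suc k)
  have df: "f differentiable (at x)" if "x \<in> S" for x
    using Suc.prems that Ck_on_Suc_imp_differentiable by blast
  have dg: "g differentiable (at x)" if "x \<in> S" for x
    using has_derivative_transform_within_open[OF has_derivative_FD[OF df[OF that]] \<open>open S\<close> that]
      Suc.prems(3)
    unfolding differentiable_def by blast
  have "FD f x = FD g x" if "x \<in> S" for x
    using FD_cong_open[OF \<open>open S\<close> that] Suc.prems(3) by blast
  then show ?case
    using Suc.prems dg Suc.IH[of "\<lambda>p. FD f p w" "\<lambda>p. FD g p w" for w]
    by (auto simp: differentiable_on_eq_differentiable_at)
qed

lemma Ck_on_const: "Ck_on k S (\<lambda>x. c)"
  by (induction k arbitrary: c) (simp_all add: FD_const)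

lemma Ck_on_bounded_linear: "bounded_linear L \<Longrightarrow> Ck_on k S L"
  by (cases k) (simp_all add: linear_continuous_on bounded_linear_imp_differentiable_on
      FD_bounded_linear Ck_on_const)

lemma Ck_on_add: "open S \<Longrightarrow> Ck_on k S f \<Longrightarrow> Ck_on k S g \<Longrightarrow> Ck_on k S (\<lambda>x. f x + g x)"
proof (induction k arbitrary: f g)
  case 0
  then show ?case by (simp add: continuous_on_add)
next
  case (Suc k)
  show ?case
  proof (simp, intro conjI allI)
    show "(\<lambda>x. f x + g x) differentiable_on S"
      using Suc.prems by simp
    show "Ck_on k S (\<lambda>p. FD (\<lambda>x. f x + g x) p w)" for w
      by (rule Ck_on_cong[OF \<open>open S\<close> Suc.IH[of "\<lambda>p. FD f p w" "\<lambda>p. FD g p w"]])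
        (use Suc.prems in \<open>auto simp: FD_add Ck_on_Suc_imp_differentiable\<close>)
  qed
qed

lemma Ck_on_bounded_linear_compose:
  "bounded_linear L \<Longrightarrow> open S \<Longrightarrow> Ck_on k S f \<Longrightarrow> Ck_on k S (\<lambda>x. L (f x))"
proof (induction k arbitrary: f)
  case 0
  then show ?case
    by (simp add: continuous_on_compose[OF _ linear_continuous_on[OF 0(1)], unfolded o_def])
next
  case (Suc k)
  show ?case
  proof (simp, intro conjI allI)
    show "(\<lambda>x. L (f x)) differentiable_on S"
      using Suc.prems
      by (auto simp: differentiable_on_eq_differentiable_at
          intro: differentiable_bounded_linear_compose)
    show "Ck_on k S (\<lambda>p. FD (\<lambda>x. L (f x)) p w)" for w
      by (rule Ck_on_cong[OF \<open>open S\<close> Suc.IH[of "\<lambda>p. FD f p w"]])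
        (use Suc.prems in \<open>auto simp: FD_bounded_linear_compose Ck_on_Suc_imp_differentiable\<close>)
  qed
qed

lemma Ck_on_bounded_bilinear: "bounded_bilinear P \<Longrightarrow> open S \<Longrightarrow> Ck_on k S f \<Longrightarrow>
    Ck_on k S g \<Longrightarrow> Ck_on k S (\<lambda>x. P (f x) (g x))"
proof (induction k arbitrary: f g)
  case 0
  then show ?case by (simp add: bounded_bilinear.continuous_on)
next
  case (Suc k)
  show ?case
  proof (simp, intro conjI allI)
    show "(\<lambda>x. P (f x) (g x)) differentiable_on S"
      using Suc.prems
      by (auto simp: differentiable_on_eq_differentiable_at intro: differentiable_bounded_bilinear)
    fix w
    have "Ck_on k S (\<lambda>x. P (f x) (FD g x w) + P (FD f x w) (g x))"
      using Suc.prems(3,4)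
      by (intro Ck_on_add[OF \<open>open S\<close>] Suc.IH[OF Suc.prems(1,2)]
          Ck_on_Suc_imp[OF Suc.prems(3)] Ck_on_Suc_imp[OF Suc.prems(4)]) simp_all
    then show "Ck_on k S (\<lambda>p. FD (\<lambda>x. P (f x) (g x)) p w)"
      by (rule Ck_on_cong[OF \<open>open S\<close>])
        (use Suc.prems in \<open>auto simp: FD_bounded_bilinear Ck_on_Suc_imp_differentiable\<close>)
  qed
qed

lemma Ck_on_inverse: "open S \<Longrightarrow> Ck_on k S f \<Longrightarrow> (\<And>x. x \<in> S \<Longrightarrow> f x \<noteq> (0::real)) \<Longrightarrow>
    Ck_on k S (\<lambda>x. inverse (f x))"
proof (induction k arbitrary: f)
  case 0
  then show ?case by (simp add: continuous_on_inverse)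
next
  case (Suc k)
  show ?case
  proof (simp, intro conjI allI)
    show "(\<lambda>x. inverse (f x)) differentiable_on S"
      using Suc.prems by (auto simp: differentiable_on_eq_differentiable_at)
    fix w
    have "Ck_on k S (\<lambda>x. inverse (f x))"
      using Suc.IH[OF Suc.prems(1) Ck_on_Suc_imp[OF Suc.prems(2)]] Suc.prems(3) by blast
    then have "Ck_on k S (\<lambda>x. - (inverse (f x) * FD f x w * inverse (f x)))"
      using Suc.prems(2)
      by (intro Ck_on_bounded_linear_compose[OF bounded_linear_minus[OF bounded_linear_ident] \<open>open S\<close>]
          Ck_on_bounded_bilinear[OF bounded_bilinear_mult \<open>open S\<close>]) simp_all
    then show "Ck_on k S (\<lambda>p. FD (\<lambda>x. inverse (f x)) p w)"
      by (rule Ck_on_cong[OF \<open>open S\<close>])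
        (use Suc.prems in \<open>auto simp: FD_inverse Ck_on_Suc_imp_differentiable\<close>)
  qed
qed

lemma Ck_on_sum:
  assumes "open S" "finite A" "\<And>i. i \<in> A \<Longrightarrow> Ck_on k S (f i)"
  shows "Ck_on k S (\<lambda>x. \<Sum>i\<in>A. f i x)"
  using assms(2,3) by (induction A rule: finite_induct) (simp_all add: Ck_on_const Ck_on_add assms(1))

lemma smooth_on_imp_differentiable: "open S \<Longrightarrow> smooth_on S f \<Longrightarrow> x \<in> S \<Longrightarrow> f differentiable (at x)"
  unfolding smooth_on_def using Ck_on_Suc_imp_differentiable by blast

lemma smooth_on_imp_continuous_on: "smooth_on S f \<Longrightarrow> continuous_on S f"
  unfolding smooth_on_def by (metis Ck_on.simps(1))

lemma smooth_on_FD: "smooth_on S f \<Longrightarrow> smooth_on S (\<lambda>p. FD f p w)"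
  unfolding smooth_on_def by (metis Ck_on.simps(2))

lemma smooth_on_cong: "open S \<Longrightarrow> smooth_on S f \<Longrightarrow> (\<And>x. x \<in> S \<Longrightarrow> f x = g x) \<Longrightarrow> smooth_on S g"
  unfolding smooth_on_def using Ck_on_cong by blast

lemma smooth_on_const: "smooth_on S (\<lambda>x. c)"
  unfolding smooth_on_def using Ck_on_const by blast

lemma smooth_on_bounded_linear: "bounded_linear L \<Longrightarrow> smooth_on S L"
  unfolding smooth_on_def using Ck_on_bounded_linear by blast

lemma smooth_on_add: "open S \<Longrightarrow> smooth_on S f \<Longrightarrow> smooth_on S g \<Longrightarrow> smooth_on S (\<lambda>x. f x + g x)"
  unfolding smooth_on_def using Ck_on_add by blast

lemma smooth_on_bounded_linear_compose:
  "bounded_linear L \<Longrightarrow> open S \<Longrightarrow> smooth_on S f \<Longrightarrow> smooth_on S (\<lambda>x. L (f x))"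
  unfolding smooth_on_def using Ck_on_bounded_linear_compose by blast

lemma smooth_on_bounded_bilinear: "bounded_bilinear P \<Longrightarrow> open S \<Longrightarrow> smooth_on S f \<Longrightarrow>
    smooth_on S g \<Longrightarrow> smooth_on S (\<lambda>x. P (f x) (g x))"
  unfolding smooth_on_def using Ck_on_bounded_bilinear by blast

lemma smooth_on_inverse: "open S \<Longrightarrow> smooth_on S f \<Longrightarrow> (\<And>x. x \<in> S \<Longrightarrow> f x \<noteq> (0::real)) \<Longrightarrow>
    smooth_on S (\<lambda>x. inverse (f x))"
  unfolding smooth_on_def using Ck_on_inverse by blast

lemma smooth_on_sum: "open S \<Longrightarrow> finite A \<Longrightarrow> (\<And>i. i \<in> A \<Longrightarrow> smooth_on S (f i)) \<Longrightarrow>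
    smooth_on S (\<lambda>x. \<Sum>i\<in>A. f i x)"
  unfolding smooth_on_def using Ck_on_sum by blast

lemma smooth_on_minus: "open S \<Longrightarrow> smooth_on S f \<Longrightarrow> smooth_on S (\<lambda>x. - f x)"
  by (rule smooth_on_bounded_linear_compose[OF bounded_linear_minus[OF bounded_linear_ident]])

lemma smooth_on_diff: "open S \<Longrightarrow> smooth_on S f \<Longrightarrow> smooth_on S g \<Longrightarrow> smooth_on S (\<lambda>x. f x - g x)"
  using smooth_on_add[of S f "\<lambda>x. - g x"] smooth_on_minus[of S g] by simp

lemma smooth_on_Pair: "open S \<Longrightarrow> smooth_on S f \<Longrightarrow> smooth_on S g \<Longrightarrow> smooth_on S (\<lambda>x. (f x, g x))"
  using smooth_on_add[of S "\<lambda>x. (f x, 0)" "\<lambda>x. (0, g x)"]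
    smooth_on_bounded_linear_compose[of "\<lambda>a. (a, 0)" S f]
    smooth_on_bounded_linear_compose[of "\<lambda>b. (0, b)" S g]
  by (simp add: bounded_linear_Pair bounded_linear_zero)

lemma smooth_on_FD_apply:
  fixes f :: "'a::euclidean_space \<Rightarrow> 'b::euclidean_space"
  assumes S: "open S" and f: "smooth_on S f" and Y: "smooth_on S Y"
  shows "smooth_on S (\<lambda>q. FD f q (Y q))"
proof (rule smooth_on_cong[OF S])
  show "smooth_on S (\<lambda>q. \<Sum>e\<in>Basis. (Y q \<bullet> e) *\<^sub>R FD f q e)"
    by (intro smooth_on_sum S finite_Basis smooth_on_bounded_bilinear[OF bounded_bilinear_scaleR S]
        smooth_on_bounded_linear_compose[OF bounded_linear_inner_left S Y] smooth_on_FD f)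
  show "(\<Sum>e\<in>Basis. (Y x \<bullet> e) *\<^sub>R FD f x e) = FD f x (Y x)" if "x \<in> S" for x
    by (rule FD_basis_expansion[OF smooth_on_imp_differentiable[OF S f that], symmetric])
qed

section \<open>Symmetry of second derivatives\<close>

lemma has_real_derivative_along_line:
  fixes f :: "'a::real_normed_vector \<Rightarrow> real"
  assumes "(f has_derivative f') (at (x + s *\<^sub>R u))"
  shows "((\<lambda>t. f (x + t *\<^sub>R u)) has_real_derivative f' u) (at s)"
proof -
  have "((\<lambda>t. x + t *\<^sub>R u) has_derivative (\<lambda>t. t *\<^sub>R u)) (at s)"
    by (auto intro!: derivative_eq_intros)
  from has_derivative_compose[OF this assms]
  have "((\<lambda>t. f (x + t *\<^sub>R u)) has_derivative (\<lambda>t. f' (t *\<^sub>R u))) (at s)" .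
  moreover have "t * f' u = f' (t *\<^sub>R u)" for t
    using linear_cmul[OF has_derivative_linear[OF assms]] by simp
  ultimately show ?thesis by (rule has_derivative_imp_has_field_derivative)
qed

text \<open>Two applications of the mean value theorem.\<close>

lemma second_difference_mean_value:
  fixes f :: "'a::real_normed_vector \<Rightarrow> real"
  assumes h: "h > 0"
    and sub: "\<And>s t. s \<in> {0..h} \<Longrightarrow> t \<in> {0..h} \<Longrightarrow> p + s *\<^sub>R a + t *\<^sub>R b \<in> S"
    and df: "\<And>q. q \<in> S \<Longrightarrow> f differentiable (at q)"
    and dfa: "\<And>q. q \<in> S \<Longrightarrow> (\<lambda>r. FD f r a) differentiable (at q)"
  obtains s t where "0 < s" "s < h" "0 < t" "t < h"
    "f (p + h *\<^sub>R a + h *\<^sub>R b) - f (p + h *\<^sub>R a) - f (p + h *\<^sub>R b) + f p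
       = h * (h * FD (\<lambda>r. FD f r a) (p + s *\<^sub>R a + t *\<^sub>R b) b)"
proof -
  define \<psi> where "\<psi> \<sigma> = f ((p + h *\<^sub>R b) + \<sigma> *\<^sub>R a) - f (p + \<sigma> *\<^sub>R a)" for \<sigma>
  have d\<psi>: "DERIV \<psi> \<sigma> :> FD f (p + h *\<^sub>R b + \<sigma> *\<^sub>R a) a - FD f (p + \<sigma> *\<^sub>R a) a"
    if "0 \<le> \<sigma>" "\<sigma> \<le> h" for \<sigma>
  proof -
    have "p + h *\<^sub>R b + \<sigma> *\<^sub>R a \<in> S" "p + \<sigma> *\<^sub>R a \<in> S"
      using sub[of \<sigma> h] sub[of \<sigma> 0] that h by (simp_all add: algebra_simps)
    then show ?thesis
      unfolding \<psi>_def by (intro DERIV_diff has_real_derivative_along_line has_derivative_FD df)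
  qed
  obtain s where s: "0 < s" "s < h"
    "\<psi> h - \<psi> 0 = h * (FD f (p + h *\<^sub>R b + s *\<^sub>R a) a - FD f (p + s *\<^sub>R a) a)"
    using MVT2[OF h, of \<psi>, OF d\<psi>] by auto
  define \<kappa> where "\<kappa> \<tau> = FD f ((p + s *\<^sub>R a) + \<tau> *\<^sub>R b) a" for \<tau>
  have d\<kappa>: "DERIV \<kappa> \<tau> :> FD (\<lambda>r. FD f r a) (p + s *\<^sub>R a + \<tau> *\<^sub>R b) b"
    if "0 \<le> \<tau>" "\<tau> \<le> h" for \<tau>
    using sub[of s \<tau>] that s
    unfolding \<kappa>_def by (intro has_real_derivative_along_line has_derivative_FD dfa) simp
  obtain t where t: "0 < t" "t < h"
    "\<kappa> h - \<kappa> 0 = h * FD (\<lambda>r. FD f r a) (p + s *\<^sub>R a + t *\<^sub>R b) b"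
    using MVT2[OF h, of \<kappa>, OF d\<kappa>] by auto
  have "f (p + h *\<^sub>R a + h *\<^sub>R b) - f (p + h *\<^sub>R a) - f (p + h *\<^sub>R b) + f p = \<psi> h - \<psi> 0"
    unfolding \<psi>_def by (simp add: add_ac)
  also have "\<dots> = h * (\<kappa> h - \<kappa> 0)"
    unfolding s(3) \<kappa>_def by (simp add: add_ac)
  finally show ?thesis
    using that s t by simp
qed

lemma dist_add_scaleR_scaleR_le:
  assumes "s \<in> {0..h}" "t \<in> {0..h}"
  shows "dist (p + s *\<^sub>R a + t *\<^sub>R b) p \<le> h * (norm a + norm b)"
proof -
  have "dist (p + s *\<^sub>R a + t *\<^sub>R b) p \<le> s * norm a + t * norm b"
    using norm_triangle_ineq[of "s *\<^sub>R a" "t *\<^sub>R b"] assms by (simp add: dist_norm)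
  also have "\<dots> \<le> h * (norm a + norm b)"
    using assms mult_right_mono[of s h "norm a"] mult_right_mono[of t h "norm b"]
    by (simp add: algebra_simps)
  finally show ?thesis .
qed

lemma second_difference_quotient_eq:
  fixes f :: "'a::real_normed_vector \<Rightarrow> real"
  assumes r: "ball p r \<subseteq> S" and h: "0 < h" "h * (norm a + norm b) < r"
    and df: "\<And>q. q \<in> S \<Longrightarrow> f differentiable (at q)"
    and dfa: "\<And>q. q \<in> S \<Longrightarrow> (\<lambda>r. FD f r a) differentiable (at q)"
  obtains q where "dist q p < r"
    "(f (p + h *\<^sub>R a + h *\<^sub>R b) - f (p + h *\<^sub>R a) - f (p + h *\<^sub>R b) + f p) / h\<^sup>2
       = FD (\<lambda>r. FD f r a) q b"
proof -
  have near: "dist (p + s *\<^sub>R a + t *\<^sub>R b) p < r" if "s \<in> {0..h}" "t \<in> {0..h}" for s t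
    using dist_add_scaleR_scaleR_le[OF that, of p a b] h(2) by linarith
  then have "p + s *\<^sub>R a + t *\<^sub>R b \<in> S" if "s \<in> {0..h}" "t \<in> {0..h}" for s t
    using r that by (auto simp: dist_commute)
  then obtain s t where "0 < s" "s < h" "0 < t" "t < h"
    and "f (p + h *\<^sub>R a + h *\<^sub>R b) - f (p + h *\<^sub>R a) - f (p + h *\<^sub>R b) + f p
       = h * (h * FD (\<lambda>r. FD f r a) (p + s *\<^sub>R a + t *\<^sub>R b) b)"
    using second_difference_mean_value[OF h(1) _ df dfa] by blast
  then show ?thesis
    using that[of "p + s *\<^sub>R a + t *\<^sub>R b"] near[of s t] h(1) by (simp add: power2_eq_square)
qed

lemma second_difference_quotient_tendsto:
  fixes f :: "'a::real_normed_vector \<Rightarrow> real"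
  assumes S: "open S" "p \<in> S"
    and df: "\<And>q. q \<in> S \<Longrightarrow> f differentiable (at q)"
    and dfa: "\<And>q. q \<in> S \<Longrightarrow> (\<lambda>r. FD f r a) differentiable (at q)"
    and cont: "continuous_on S (\<lambda>q. FD (\<lambda>r. FD f r a) q b)"
  shows "((\<lambda>h. (f (p + h *\<^sub>R a + h *\<^sub>R b) - f (p + h *\<^sub>R a) - f (p + h *\<^sub>R b) + f p) / h\<^sup>2)
           \<longlongrightarrow> FD (\<lambda>r. FD f r a) p b) (at_right 0)"
  unfolding tendsto_iff eventually_at_right_field
proof (intro allI impI)
  fix e :: real
  assume "e > 0"
  obtain d where "d > 0"
    and d: "\<And>q. dist q p < d \<Longrightarrow> dist (FD (\<lambda>r. FD f r a) q b) (FD (\<lambda>r. FD f r a) p b) < e"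
    using cont S \<open>e > 0\<close>
    unfolding continuous_on_eq_continuous_at[OF S(1)] continuous_at_eps_delta by blast
  obtain d' where "d' > 0" "ball p d' \<subseteq> S"
    using S open_contains_ball by blast
  define r where "r = min d d'"
  define c where "c = norm a + norm b + 1"
  have "r > 0" "c > 0" "ball p r \<subseteq> S"
    using \<open>d > 0\<close> \<open>d' > 0\<close> \<open>ball p d' \<subseteq> S\<close> by (auto simp: r_def c_def add_nonneg_pos)
  show "\<exists>\<eta>>0. \<forall>h>0. h < \<eta> \<longrightarrow>
      dist ((f (p + h *\<^sub>R a + h *\<^sub>R b) - f (p + h *\<^sub>R a) - f (p + h *\<^sub>R b) + f p) / h\<^sup>2)
        (FD (\<lambda>r. FD f r a) p b) < e"
  proof (intro exI conjI allI impI)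
    show "0 < r / c"
      using \<open>r > 0\<close> \<open>c > 0\<close> by simp
    fix h :: real
    assume "0 < h" "h < r / c"
    then have "h * (norm a + norm b) < r"
      using \<open>c > 0\<close> mult_left_mono[of "norm a + norm b" c h] by (simp add: c_def field_simps)
    then obtain q where "dist q p < r"
      "(f (p + h *\<^sub>R a + h *\<^sub>R b) - f (p + h *\<^sub>R a) - f (p + h *\<^sub>R b) + f p) / h\<^sup>2
         = FD (\<lambda>r. FD f r a) q b"
      using second_difference_quotient_eq[OF \<open>ball p r \<subseteq> S\<close> \<open>0 < h\<close> _ df dfa] by blast
    then show "dist ((f (p + h *\<^sub>R a + h *\<^sub>R b) - f (p + h *\<^sub>R a) - f (p + h *\<^sub>R b) + f p) / h\<^sup>2)
        (FD (\<lambda>r. FD f r a) p b) < e"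
      using d by (simp add: r_def)
  qed
qed

text \<open>The second difference quotient is symmetric in the two directions.\<close>

lemma FD_FD_commute:
  fixes f :: "'a::real_normed_vector \<Rightarrow> real"
  assumes S: "open S" "p \<in> S"
    and df: "\<And>q. q \<in> S \<Longrightarrow> f differentiable (at q)"
    and dfa: "\<And>q. q \<in> S \<Longrightarrow> (\<lambda>r. FD f r a) differentiable (at q)"
    and dfb: "\<And>q. q \<in> S \<Longrightarrow> (\<lambda>r. FD f r b) differentiable (at q)"
    and conta: "continuous_on S (\<lambda>q. FD (\<lambda>r. FD f r a) q b)"
    and contb: "continuous_on S (\<lambda>q. FD (\<lambda>r. FD f r b) q a)"
  shows "FD (\<lambda>r. FD f r a) p b = FD (\<lambda>r. FD f r b) p a"
proof -
  define Q where "Q u w h = (f (p + h *\<^sub>R u + h *\<^sub>R w) - f (p + h *\<^sub>R u) - f (p + h *\<^sub>R w) + f p) / h\<^sup>2"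
    for u w h
  have "(Q a b \<longlongrightarrow> FD (\<lambda>r. FD f r a) p b) (at_right 0)"
    unfolding Q_def by (rule second_difference_quotient_tendsto[OF S df dfa conta])
  moreover have "(Q b a \<longlongrightarrow> FD (\<lambda>r. FD f r b) p a) (at_right 0)"
    unfolding Q_def by (rule second_difference_quotient_tendsto[OF S df dfb contb])
  moreover have "Q a b = Q b a"
  proof
    fix h
    have "p + h *\<^sub>R a + h *\<^sub>R b = p + h *\<^sub>R b + h *\<^sub>R a"
      by (simp add: algebra_simps)
    then show "Q a b h = Q b a h"
      unfolding Q_def by (simp only:) (simp add: algebra_simps)
  qed
  ultimately show ?thesis
    using tendsto_unique[OF trivial_limit_at_right_real] by metis
qed

lemma smooth_on_FD_FD_commute:
  fixes f :: "'a::euclidean_space \<Rightarrow> real"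
  assumes "open S" "smooth_on S f" "p \<in> S"
  shows "FD (\<lambda>r. FD f r a) p b = FD (\<lambda>r. FD f r b) p a"
  using assms
  by (intro FD_FD_commute smooth_on_imp_differentiable smooth_on_imp_continuous_on smooth_on_FD)

lemma FD_FD_basis_expansion:
  fixes f :: "'a::euclidean_space \<Rightarrow> 'b::euclidean_space"
  assumes S: "open S" and f: "smooth_on S f" and p: "p \<in> S"
  shows "FD (\<lambda>r. FD f r u) p c = (\<Sum>e\<in>Basis. (u \<bullet> e) *\<^sub>R FD (\<lambda>r. FD f r e) p c)"
proof -
  have dfe: "(\<lambda>r. FD f r e) differentiable (at p)" for e
    by (rule smooth_on_imp_differentiable[OF S smooth_on_FD[OF f] p])
  have "FD (\<lambda>r. FD f r u) p = FD (\<lambda>r. \<Sum>e\<in>Basis. (u \<bullet> e) *\<^sub>R FD f r e) p"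
    by (rule FD_cong_open[OF S p], rule FD_basis_expansion[OF smooth_on_imp_differentiable[OF S f]])
  then show ?thesis
    by (simp add: FD_sum differentiable_bounded_linear_compose[OF bounded_linear_scaleR_right dfe]
        FD_bounded_linear_compose[OF bounded_linear_scaleR_right dfe])
qed

lemma FD_FD_apply:
  fixes f :: "'a::euclidean_space \<Rightarrow> 'b::euclidean_space"
  assumes S: "open S" and f: "smooth_on S f" and Y: "smooth_on S Y" and p: "p \<in> S"
  shows "FD (\<lambda>q. FD f q (Y q)) p c = FD f p (FD Y p c) + FD (\<lambda>r. FD f r (Y p)) p c"
proof -
  have dY: "(\<lambda>q. Y q \<bullet> e) differentiable (at p)" for e
    by (intro differentiable_bounded_linear_compose[OF bounded_linear_inner_left]
        smooth_on_imp_differentiable[OF S Y p])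
  have dfe: "(\<lambda>q. FD f q e) differentiable (at p)" for e
    by (rule smooth_on_imp_differentiable[OF S smooth_on_FD[OF f] p])
  have "FD (\<lambda>q. FD f q (Y q)) p = FD (\<lambda>q. \<Sum>e\<in>Basis. (Y q \<bullet> e) *\<^sub>R FD f q e) p"
    by (rule FD_cong_open[OF S p], rule FD_basis_expansion[OF smooth_on_imp_differentiable[OF S f]])
  then have "FD (\<lambda>q. FD f q (Y q)) p c = (\<Sum>e\<in>Basis. FD (\<lambda>q. (Y q \<bullet> e) *\<^sub>R FD f q e) p c)"
    by (simp add: FD_sum differentiable_bounded_bilinear[OF bounded_bilinear_scaleR dY dfe])
  also have "\<dots> = (\<Sum>e\<in>Basis. (Y p \<bullet> e) *\<^sub>R FD (\<lambda>q. FD f q e) p c + (FD Y p c \<bullet> e) *\<^sub>R FD f p e)"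
    by (rule sum.cong[OF refl])
      (simp add: FD_bounded_bilinear[OF bounded_bilinear_scaleR dY dfe]
        FD_bounded_linear_compose[OF bounded_linear_inner_left smooth_on_imp_differentiable[OF S Y p]])
  also have "\<dots> = FD (\<lambda>r. FD f r (Y p)) p c + FD f p (FD Y p c)"
    unfolding sum.distrib FD_FD_basis_expansion[OF S f p, of "Y p" c, symmetric]
      FD_basis_expansion[OF smooth_on_imp_differentiable[OF S f p], of "FD Y p c", symmetric]
    by (rule refl)
  finally show ?thesis by simp
qed

lemma vf_apply_eq: "vf_apply X f = (\<lambda>p. FD f p (X p))"
  by (rule ext) (simp add: vf_apply_def)

lemma lie_eq: "lie X Y = (\<lambda>p. FD Y p (X p) - FD X p (Y p))"
  by (rule ext) (simp add: lie_def)

lemma lie_skew: "lie X Y p = - lie Y X p"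
  by (simp add: lie_def)

lemma vf_apply_bounded_linear: "bounded_linear L \<Longrightarrow> vf_apply X L q = L (X q)"
  by (simp add: vf_apply_def FD_bounded_linear)

lemma vf_apply_cong_open:
  "open S \<Longrightarrow> p \<in> S \<Longrightarrow> (\<And>q. q \<in> S \<Longrightarrow> g q = g' q) \<Longrightarrow> vf_apply X g p = vf_apply X g' p"
  unfolding vf_apply_def using FD_cong_open by metis

lemma vf_apply_diff: "g differentiable (at p) \<Longrightarrow> g' differentiable (at p) \<Longrightarrow>
    vf_apply X (\<lambda>q. g q - g' q) p = vf_apply X g p - vf_apply X g' p"
  unfolding vf_apply_def by (rule FD_diff)

lemma lie_cong_open:
  assumes "open S" "p \<in> S" "\<And>q. q \<in> S \<Longrightarrow> X q = X' q" "\<And>q. q \<in> S \<Longrightarrow> Y q = Y' q"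
  shows "lie X Y p = lie X' Y' p"
  using assms FD_cong_open[of S p X X'] FD_cong_open[of S p Y Y'] by (simp add: lie_def)

lemma smooth_on_vf_apply:
  fixes f :: "pt \<Rightarrow> 'b::euclidean_space"
  shows "open S \<Longrightarrow> smooth_on S f \<Longrightarrow> smooth_on S X \<Longrightarrow> smooth_on S (vf_apply X f)"
  unfolding vf_apply_eq by (rule smooth_on_FD_apply)

lemma smooth_on_lie:
  "open S \<Longrightarrow> smooth_on S X \<Longrightarrow> smooth_on S Y \<Longrightarrow> smooth_on S (lie X Y)"
  unfolding lie_eq by (intro smooth_on_diff smooth_on_FD_apply)

lemma vf_apply_lie:
  fixes f :: "pt \<Rightarrow> real"
  assumes S: "open S" and f: "smooth_on S f" and X: "smooth_on S X" and Y: "smooth_on S Y"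
    and p: "p \<in> S"
  shows "vf_apply (lie X Y) f p = vf_apply X (vf_apply Y f) p - vf_apply Y (vf_apply X f) p"
proof -
  have "vf_apply (lie X Y) f p = FD f p (FD Y p (X p)) - FD f p (FD X p (Y p))"
    unfolding vf_apply_def lie_def
    using linear_FD[OF smooth_on_imp_differentiable[OF S f p]] by (simp add: linear_diff)
  moreover have "vf_apply X (vf_apply Y f) p = FD f p (FD Y p (X p)) + FD (\<lambda>r. FD f r (Y p)) p (X p)"
    unfolding vf_apply_eq by (rule FD_FD_apply[OF S f Y p])
  moreover have "vf_apply Y (vf_apply X f) p = FD f p (FD X p (Y p)) + FD (\<lambda>r. FD f r (X p)) p (Y p)"
    unfolding vf_apply_eq by (rule FD_FD_apply[OF S f X p])
  moreover have "FD (\<lambda>r. FD f r (Y p)) p (X p) = FD (\<lambda>r. FD f r (X p)) p (Y p)"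
    by (rule smooth_on_FD_FD_commute[OF S f p])
  ultimately show ?thesis by simp
qed

lemma vf_apply_lie_lie:
  fixes f :: "pt \<Rightarrow> real"
  assumes S: "open S" and f: "smooth_on S f" and smooth: "smooth_on S U" "smooth_on S V" "smooth_on S W"
    and p: "p \<in> S"
  shows "vf_apply (lie U (lie V W)) f p
    = vf_apply U (vf_apply V (vf_apply W f)) p - vf_apply U (vf_apply W (vf_apply V f)) p
      - vf_apply V (vf_apply W (vf_apply U f)) p + vf_apply W (vf_apply V (vf_apply U f)) p"
proof -
  note vf = smooth_on_vf_apply[OF S]
  have "vf_apply U (vf_apply (lie V W) f) p
      = vf_apply U (\<lambda>q. vf_apply V (vf_apply W f) q - vf_apply W (vf_apply V f) q) p"
    using vf_apply_lie[OF S f smooth(2,3)] by (intro vf_apply_cong_open[OF S p])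
  also have "\<dots> = vf_apply U (vf_apply V (vf_apply W f)) p - vf_apply U (vf_apply W (vf_apply V f)) p"
    using f smooth p by (intro vf_apply_diff smooth_on_imp_differentiable[OF S] vf)
  finally show ?thesis
    using f smooth p
    by (simp add: vf_apply_lie[OF S] smooth_on_lie[OF S] vf)
qed

text \<open>Both sides are compared on the coordinate functions \<open>q \<mapsto> q \<bullet> e\<close>.\<close>

lemma lie_jacobi:
  assumes S: "open S" and X: "smooth_on S X" and Y: "smooth_on S Y" and Z: "smooth_on S Z"
    and p: "p \<in> S"
  shows "lie X (lie Y Z) p = lie (lie X Y) Z p + lie Y (lie X Z) p"
proof (rule euclidean_eqI)
  fix e :: pt
  define c where "c q = q \<bullet> e" for q :: pt
  have c: "smooth_on S c"
    unfolding c_def by (rule smooth_on_bounded_linear[OF bounded_linear_inner_left])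
  have ce: "vf_apply W c q = W q \<bullet> e" for W q
    unfolding c_def by (rule vf_apply_bounded_linear[OF bounded_linear_inner_left])
  have "lie X (lie Y Z) p \<bullet> e = vf_apply (lie X (lie Y Z)) c p"
    and "lie (lie X Y) Z p \<bullet> e = - vf_apply (lie Z (lie X Y)) c p"
    and "lie Y (lie X Z) p \<bullet> e = vf_apply (lie Y (lie X Z)) c p"
    by (simp_all add: ce lie_skew[of "lie X Y" Z p])
  then show "lie X (lie Y Z) p \<bullet> e = (lie (lie X Y) Z p + lie Y (lie X Z) p) \<bullet> e"
    unfolding inner_add_left vf_apply_lie_lie[OF S c X Y Z p] vf_apply_lie_lie[OF S c Z X Y p]
      vf_apply_lie_lie[OF S c Y X Z p]
    by simp
qed

lemma lie_scaleR_right: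
  assumes "X differentiable (at p)" "f differentiable (at p)" "Y differentiable (at p)"
  shows "lie X (\<lambda>q. f q *\<^sub>R Y q) p = f p *\<^sub>R lie X Y p + vf_apply X f p *\<^sub>R Y p"
proof -
  have "FD (\<lambda>q. f q *\<^sub>R Y q) p (X p) = f p *\<^sub>R FD Y p (X p) + FD f p (X p) *\<^sub>R Y p"
    by (rule FD_bounded_bilinear[OF bounded_bilinear_scaleR assms(2,3)])
  moreover have "FD X p (f p *\<^sub>R Y p) = f p *\<^sub>R FD X p (Y p)"
    by (rule linear_cmul[OF linear_FD[OF assms(1)]])
  ultimately show ?thesis
    by (simp add: lie_def vf_apply_def scaleR_diff_right)
qed

lemma dt_eq: "dt f = (\<lambda>p. FD f p (1, 0))"
  by (rule ext) (simp add: dt_def)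

lemma dx_eq: "dx i f = (\<lambda>p. FD f p (0, axis i 1))"
  by (rule ext) (simp add: dx_def)

lemma grad_eq_sum: "grad f = (\<lambda>p. \<Sum>i\<in>UNIV. dx i f p *\<^sub>R axis i 1)"
  by (rule ext) (simp add: grad_def vec_eq_iff forall_3 sum_3 axis_def)

lemma divg_3: "divg F p = dx 1 F p $ 1 + dx 2 F p $ 2 + dx 3 F p $ 3"
  by (simp add: divg_def sum_3)

lemma FD_coordinates:
  assumes "f differentiable (at p)"
  shows "FD f p w = fst w *\<^sub>R dt f p + (\<Sum>i\<in>UNIV. snd w $ i *\<^sub>R dx i f p)"
proof -
  have "w = fst w *\<^sub>R (1, 0) + (\<Sum>i\<in>UNIV. snd w $ i *\<^sub>R (0, axis i 1))"
    by (simp add: prod_eq_iff vec_eq_iff forall_3 sum_3 axis_def)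
  then have "FD f p w = FD f p (fst w *\<^sub>R (1, 0) + (\<Sum>i\<in>UNIV. snd w $ i *\<^sub>R (0, axis i 1)))"
    by simp
  also have "\<dots> = fst w *\<^sub>R dt f p + (\<Sum>i\<in>UNIV. snd w $ i *\<^sub>R dx i f p)"
    using linear_FD[OF assms] by (simp only: linear_add linear_sum linear_cmul dt_def dx_def)
  finally show ?thesis .
qed

lemma FD_coordinates_real:
  fixes f :: "pt \<Rightarrow> real"
  assumes "f differentiable (at p)"
  shows "FD f p w = fst w * dt f p + snd w \<bullet> grad f p"
  unfolding FD_coordinates[OF assms] by (simp add: inner_vec_def grad_def)

lemma smooth_on_dx: "smooth_on S f \<Longrightarrow> smooth_on S (dx i f)"
  unfolding dx_eq by (rule smooth_on_FD)

lemma smooth_on_dt: "smooth_on S f \<Longrightarrow> smooth_on S (dt f)"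
  unfolding dt_eq by (rule smooth_on_FD)

lemma smooth_on_grad: "open S \<Longrightarrow> smooth_on S f \<Longrightarrow> smooth_on S (grad f)"
  unfolding grad_eq_sum
  by (rule smooth_on_sum)
    (simp_all add: smooth_on_bounded_linear_compose[OF bounded_linear_scaleR_left] smooth_on_dx)

lemma FD_grad:
  assumes S: "open S" and f: "smooth_on S f" and p: "p \<in> S"
  shows "FD (grad f) p c = (\<chi> j. FD (dx j f) p c)"
proof -
  have d: "dx i f differentiable (at p)" for i
    by (rule smooth_on_imp_differentiable[OF S smooth_on_dx[OF f] p])
  have "FD (grad f) p c = (\<Sum>i\<in>UNIV. FD (dx i f) p c *\<^sub>R axis i 1)"
    unfolding grad_eq_sum
    by (simp add: FD_sum differentiable_bounded_linear_compose[OF bounded_linear_scaleR_left d]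
        FD_bounded_linear_compose[OF bounded_linear_scaleR_left d])
  then show ?thesis
    by (simp add: vec_eq_iff forall_3 sum_3 axis_def)
qed

text \<open>Mixed partials of \<open>\<phi>\<close> cancel in \<open>curl (grad \<phi>)\<close>.\<close>

lemma curl_grad_add:
  assumes S: "open S" and \<phi>: "smooth_on S \<phi>" and F: "smooth_on S F" and p: "p \<in> S"
  shows "curl (\<lambda>q. grad \<phi> q + F q) p = curl F p"
proof -
  have dx_add: "dx i (\<lambda>q. grad \<phi> q + F q) p $ j = FD (dx j \<phi>) p (0, axis i 1) + dx i F p $ j" for i j
    using FD_add[OF smooth_on_imp_differentiable[OF S smooth_on_grad[OF S \<phi>] p]
        smooth_on_imp_differentiable[OF S F p]]
    by (simp add: dx_def FD_grad[OF S \<phi> p])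
  have "FD (dx j \<phi>) p (0, axis i 1) = FD (dx i \<phi>) p (0, axis j 1)" for i j
    unfolding dx_eq by (rule smooth_on_FD_FD_commute[OF S \<phi> p])
  then show ?thesis
    unfolding curl_def dx_add by simp
qed

section \<open>The 2-form \<open>-E\<cdot>dx\<and>dt + B\<cdot>(dx\<and>dx)\<close>\<close>

definition field_form :: "real^3 \<Rightarrow> real^3 \<Rightarrow> pt \<Rightarrow> pt \<Rightarrow> real" where
  "field_form E B a b = - (E \<bullet> snd a * fst b - E \<bullet> snd b * fst a) + B \<bullet> cross3 (snd a) (snd b)"

lemma Omega_eq_field_form: "Omega \<phi> v B = (\<lambda>q. field_form (grad \<phi> q + cross3 (v q) (B q)) (B q))"
  by (intro ext) (simp add: Omega_def field_form_def Let_def)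

lemma field_form_skew: "field_form E B a b = - field_form E B b a"
  by (simp add: field_form_def cross_skew[of "snd a"])

lemma field_form_diff_left: "field_form E B (a - a') b = field_form E B a b - field_form E B a' b"
  by (simp add: field_form_def inner_diff_left inner_diff_right cross3_simps)

lemma field_form_scaleR_left: "field_form E B (c *\<^sub>R a) b = c * field_form E B a b"
  by (simp add: field_form_def cross_mult_left algebra_simps)

lemma field_form_zero_left: "field_form E B 0 b = 0"
  by (simp add: field_form_def)

lemma field_form_zero_right: "field_form E B a 0 = 0"
  by (simp add: field_form_def)

lemma bounded_bilinear_cross3: "bounded_bilinear cross3"
  using bilinear_cross bilinear_conv_bounded_bilinear by blast

lemma FD_field_form:
  assumes "E differentiable (at p)" "B differentiable (at p)" "X differentiable (at p)"
    "Y differentiable (at p)"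
  shows "FD (\<lambda>q. field_form (E q) (B q) (X q) (Y q)) p c
    = field_form (FD E p c) (FD B p c) (X p) (Y p) + field_form (E p) (B p) (FD X p c) (Y p)
      + field_form (E p) (B p) (X p) (FD Y p c)"
proof -
  note d = has_derivative_FD[OF assms(1)] has_derivative_FD[OF assms(2)]
    has_derivative_FD[OF assms(3)] has_derivative_FD[OF assms(4)]
  have "((\<lambda>q. field_form (E q) (B q) (X q) (Y q)) has_derivative (\<lambda>c.
      field_form (FD E p c) (FD B p c) (X p) (Y p) + field_form (E p) (B p) (FD X p c) (Y p)
      + field_form (E p) (B p) (X p) (FD Y p c))) (at p)"
    unfolding field_form_def
    by (rule has_derivative_eq_rhs,
        (rule derivative_intros bounded_bilinear.FDERIV[OF bounded_bilinear_cross3] d)+)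
      (simp add: fun_eq_iff algebra_simps cross3_simps)
  then show ?thesis by (simp add: FD_eqI)
qed

text \<open>In coordinates, \<open>d\<Omega> = 0\<close> amounts to \<open>div B = 0\<close> and \<open>\<partial>\<^sub>t B = curl E\<close>.\<close>

lemma field_form_cyclic_sum:
  fixes Et Bt :: "real^3" and E B :: "3 \<Rightarrow> real^3" and a b c :: pt
  assumes "Bt = vector [E 2 $ 3 - E 3 $ 2, E 3 $ 1 - E 1 $ 3, E 1 $ 2 - E 2 $ 1]"
    and "B 1 $ 1 + B 2 $ 2 + B 3 $ 3 = 0"
  defines "E' w \<equiv> fst w *\<^sub>R Et + (\<Sum>i\<in>UNIV. snd w $ i *\<^sub>R E i)"
    and "B' w \<equiv> fst w *\<^sub>R Bt + (\<Sum>i\<in>UNIV. snd w $ i *\<^sub>R B i)"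
  shows "field_form (E' a) (B' a) b c + field_form (E' b) (B' b) c a + field_form (E' c) (B' c) a b = 0"
proof -
  have B3: "B 3 $ 3 = - B 1 $ 1 - B 2 $ 2"
    using assms(2) by simp
  show ?thesis
    unfolding field_form_def E'_def B'_def assms(1)
    by (simp add: inner_vec_def sum_3 cross3_def algebra_simps B3)
qed

lemma field_form_closed:
  assumes E: "E differentiable (at p)" and B: "B differentiable (at p)"
    and div: "divg B p = 0" and faraday: "dt B p = curl E p"
  shows "field_form (FD E p a) (FD B p a) b c + field_form (FD E p b) (FD B p b) c a
      + field_form (FD E p c) (FD B p c) a b = 0"
  unfolding FD_coordinates[OF E] FD_coordinates[OF B]
  by (rule field_form_cyclic_sum) (use div faraday in \<open>simp_all add: curl_def divg_3\<close>)

locale closed_field_form =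
  fixes M :: "pt set" and E B :: "pt \<Rightarrow> real^3"
  assumes open_M: "open M" and smooth_E: "smooth_on M E" and smooth_B: "smooth_on M B"
    and divg_B: "\<And>p. p \<in> M \<Longrightarrow> divg B p = 0"
    and faraday: "\<And>p. p \<in> M \<Longrightarrow> dt B p = curl E p"
begin

abbreviation \<Omega> :: "pt \<Rightarrow> pt \<Rightarrow> pt \<Rightarrow> real" where
  "\<Omega> q \<equiv> field_form (E q) (B q)"

lemma FD_\<Omega>_apply:
  assumes X: "X differentiable (at p)" and p: "p \<in> M"
  shows "FD (\<lambda>q. \<Omega> q (X q) b) p c = field_form (FD E p c) (FD B p c) (X p) b + \<Omega> p (FD X p c) b"
  using FD_field_form[OF smooth_on_imp_differentiable[OF open_M smooth_E p]
      smooth_on_imp_differentiable[OF open_M smooth_B p] X differentiable_const]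
  by (simp add: FD_const field_form_zero_right)

lemma FD_\<Omega>:
  "p \<in> M \<Longrightarrow> FD (\<lambda>q. \<Omega> q a b) p c = field_form (FD E p c) (FD B p c) a b"
  using FD_\<Omega>_apply[of "\<lambda>q. a" p b c] by (simp add: FD_const field_form_zero_left)

text \<open>Cartan's formula \<open>\<L>\<^sub>X \<Omega> = d(i(X) \<Omega>) + i(X) d\<Omega>\<close> with \<open>i(X) \<Omega> = df\<close> and \<open>d\<Omega> = 0\<close>.\<close>

lemma lie_deriv2_hamiltonian_eq_0:
  assumes X: "smooth_on M X" and f: "smooth_on M f" and H: "hamiltonian_with M \<Omega> X f"
    and p: "p \<in> M"
  shows "lie_deriv2 X \<Omega> p u w = 0"
proof -
  have dH: "field_form (FD E p c) (FD B p c) (X p) w' + \<Omega> p (FD X p c) w' = FD (\<lambda>q. FD f q w') p c"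
    for c w'
  proof -
    have "FD (\<lambda>q. \<Omega> q (X q) w') p = FD (\<lambda>q. FD f q w') p"
      by (rule FD_cong_open[OF open_M p]) (use H in \<open>unfold hamiltonian_with_def, blast\<close>)
    then show ?thesis
      using FD_\<Omega>_apply[OF smooth_on_imp_differentiable[OF open_M X p] p, of w' c] by simp
  qed
  have "FD (\<lambda>q. FD f q w) p u = FD (\<lambda>q. FD f q u) p w"
    by (rule smooth_on_FD_FD_commute[OF open_M f p])
  moreover have "field_form (FD E p (X p)) (FD B p (X p)) u w + field_form (FD E p u) (FD B p u) w (X p)
      + field_form (FD E p w) (FD B p w) (X p) u = 0"
    using divg_B[OF p] faraday[OF p]
    by (intro field_form_closed smooth_on_imp_differentiable[OF open_M] smooth_E smooth_B p)
  ultimately show ?thesis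
    unfolding lie_deriv2_def FD_\<Omega>[OF p] field_form_skew[of "E p" "B p" u "FD X p w"]
    using dH[of u w] dH[of w u] field_form_skew[of "FD E p u" "FD B p u" w "X p"]
    by (simp add: algebra_simps)
qed

text \<open>\<open>i([X,Y]) \<Omega> = \<L>\<^sub>X (i(Y) \<Omega>) - i(Y) (\<L>\<^sub>X \<Omega>) = d(X g)\<close>.\<close>

lemma hamiltonian_with_lie:
  assumes X: "smooth_on M X" and Y: "smooth_on M Y" and f: "smooth_on M f" and g: "smooth_on M g"
    and HX: "hamiltonian_with M \<Omega> X f" and HY: "hamiltonian_with M \<Omega> Y g"
  shows "hamiltonian_with M \<Omega> (lie X Y) (vf_apply X g)"
  unfolding hamiltonian_with_def
proof (intro ballI allI)
  fix p w
  assume p: "p \<in> M"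
  have "FD (\<lambda>q. \<Omega> q (Y q) w) p = FD (\<lambda>q. FD g q w) p"
    by (rule FD_cong_open[OF open_M p]) (use HY in \<open>unfold hamiltonian_with_def, blast\<close>)
  then have dHY: "field_form (FD E p (X p)) (FD B p (X p)) (Y p) w + \<Omega> p (FD Y p (X p)) w
      = FD (\<lambda>q. FD g q w) p (X p)"
    using FD_\<Omega>_apply[OF smooth_on_imp_differentiable[OF open_M Y p] p, of w "X p"] by simp
  have LX: "field_form (FD E p (X p)) (FD B p (X p)) (Y p) w + \<Omega> p (FD X p (Y p)) w
      + \<Omega> p (Y p) (FD X p w) = 0"
    using lie_deriv2_hamiltonian_eq_0[OF X f HX p, of "Y p" w] unfolding lie_deriv2_def FD_\<Omega>[OF p] .
  have "\<Omega> p (Y p) (FD X p w) = FD g p (FD X p w)"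
    using HY p unfolding hamiltonian_with_def by blast
  moreover have "FD (vf_apply X g) p w = FD g p (FD X p w) + FD (\<lambda>r. FD g r (X p)) p w"
    unfolding vf_apply_eq by (rule FD_FD_apply[OF open_M g X p])
  moreover have "FD (\<lambda>q. FD g q w) p (X p) = FD (\<lambda>r. FD g r (X p)) p w"
    by (rule smooth_on_FD_FD_commute[OF open_M g p])
  moreover have "\<Omega> p (lie X Y p) w = \<Omega> p (FD Y p (X p)) w - \<Omega> p (FD X p (Y p)) w"
    unfolding lie_def by (rule field_form_diff_left)
  ultimately show "\<Omega> p (lie X Y p) w = FD (vf_apply X g) p w"
    using dHY LX by (simp add: algebra_simps)
qed

end

section \<open>Infinitesimal symmetries of a suspension\<close>

lemma smooth_on_suspension: "open M \<Longrightarrow> smooth_on M v \<Longrightarrow> smooth_on M (suspension v)"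
  unfolding suspension_def[abs_def] by (rule smooth_on_Pair[OF _ smooth_on_const])

lemma FD_suspension: "v differentiable (at p) \<Longrightarrow> FD (suspension v) p c = (0, FD v p c)"
  unfolding suspension_def[abs_def] by (simp add: FD_Pair FD_const)

lemma lie_suspension_suspension: "lie (suspension v) (suspension v) p = 0"
  by (simp add: lie_def)

lemma fst_lie_suspension:
  assumes "v differentiable (at p)" "X differentiable (at p)"
  shows "fst (lie (suspension v) X p) = vf_apply (suspension v) (\<lambda>q. fst (X q)) p"
  using assms
  by (simp add: lie_def vf_apply_def FD_suspension FD_bounded_linear_compose[OF bounded_linear_fst])

text \<open>The factor in the definition of an infinitesimal symmetry is forced: compare first components,
  using \<open>fst (suspension v p) = 1\<close>.\<close>

lemma inf_symmetryI:
  assumes "\<And>p. p \<in> M \<Longrightarrow> v differentiable (at p)" "\<And>p. p \<in> M \<Longrightarrow> X differentiable (at p)"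
    and "\<And>p. p \<in> M \<Longrightarrow> lie (suspension v) X p = c p *\<^sub>R suspension v p"
  shows "inf_symmetry M v X"
  unfolding inf_symmetry_def
proof
  fix p
  assume p: "p \<in> M"
  have "c p = vf_apply (suspension v) (\<lambda>q. fst (X q)) p"
    using fst_lie_suspension[OF assms(1,2)[OF p]] assms(3)[OF p] by (simp add: suspension_def)
  then show "lie (suspension v) X p = vf_apply (suspension v) (\<lambda>q. fst (X q)) p *\<^sub>R suspension v p"
    using assms(3)[OF p] by simp
qed

lemma lie_add_right:
  assumes "X differentiable (at p)" "Y differentiable (at p)" "Z differentiable (at p)"
  shows "lie X (\<lambda>q. Y q + Z q) p = lie X Y p + lie X Z p"
  using assms linear_add[OF linear_FD[OF assms(1)]] by (simp add: lie_def FD_add)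

lemma inf_symmetry_lie:
  assumes M: "open M" and v: "smooth_on M v" and X: "smooth_on M X" and Y: "smooth_on M Y"
    and SX: "inf_symmetry M v X" and SY: "inf_symmetry M v Y"
  shows "inf_symmetry M v (lie X Y)"
proof -
  let ?S = "suspension v"
  define a where "a = vf_apply ?S (\<lambda>q. fst (X q))"
  define b where "b = vf_apply ?S (\<lambda>q. fst (Y q))"
  have S: "smooth_on M ?S"
    by (rule smooth_on_suspension[OF M v])
  have "smooth_on M a" "smooth_on M b"
    unfolding a_def b_def
    by (intro smooth_on_vf_apply[OF M] smooth_on_bounded_linear_compose[OF bounded_linear_fst M] X Y S)+
  note diff = smooth_on_imp_differentiable[OF M] this S X Y
  have SX': "lie ?S X q = a q *\<^sub>R ?S q" and SY': "lie ?S Y q = b q *\<^sub>R ?S q" if "q \<in> M" for q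
    using SX SY that unfolding inf_symmetry_def a_def b_def by blast+
  show ?thesis
  proof (rule inf_symmetryI)
    fix p
    assume p: "p \<in> M"
    have "lie ?S (lie X Y) p = lie (lie ?S X) Y p + lie X (lie ?S Y) p"
      by (rule lie_jacobi[OF M S X Y p])
    also have "\<dots> = lie (\<lambda>q. a q *\<^sub>R ?S q) Y p + lie X (\<lambda>q. b q *\<^sub>R ?S q) p"
      using SX' SY' by (intro arg_cong2[where f = "(+)"] lie_cong_open[OF M p]) simp_all
    also have "\<dots> = - lie Y (\<lambda>q. a q *\<^sub>R ?S q) p + lie X (\<lambda>q. b q *\<^sub>R ?S q) p"
      by (simp add: lie_skew[of _ Y])
    also have "\<dots> = (vf_apply X b p - vf_apply Y a p) *\<^sub>R ?S p"
      using lie_skew[of X ?S p] lie_skew[of Y ?S p] SX'[OF p] SY'[OF p] p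
      by (simp add: lie_scaleR_right diff algebra_simps)
    finally show "lie ?S (lie X Y) p = (vf_apply X b p - vf_apply Y a p) *\<^sub>R ?S p" .
  qed (use diff smooth_on_lie[OF M X Y] v in auto)
qed

lemma lie_suspension_spatial:
  assumes "v differentiable (at p)" "Z differentiable (at p)"
  shows "lie (suspension v) (\<lambda>q. (0, Z q)) p = (0, FD Z p (suspension v p) - FD v p (0, Z p))"
  using assms by (simp add: lie_def FD_Pair FD_const FD_suspension)

text \<open>\<open>Z_frozen\<close> says \<open>[\<partial>\<^sub>t + v, Z] = 0\<close>: the spatial field \<open>Z\<close> is frozen into the flow.
  It stays so after division by a conserved function.\<close>

lemma lie_suspension_scaled_spatial_eq_0:
  assumes v: "v differentiable (at p)" and r: "r differentiable (at p)" "r p \<noteq> 0"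
    and Z: "Z differentiable (at p)"
    and r_conserved: "vf_apply (suspension v) r p = 0"
    and Z_frozen: "FD Z p (suspension v p) = FD v p (0, Z p)"
  shows "lie (suspension v) (\<lambda>q. (0, inverse (r q) *\<^sub>R Z q)) p = 0"
proof -
  have "(\<lambda>q. (0::real, inverse (r q) *\<^sub>R Z q)) = (\<lambda>q. inverse (r q) *\<^sub>R (0, Z q))"
    by simp
  moreover have "vf_apply (suspension v) (\<lambda>q. inverse (r q)) p = 0"
    using r r_conserved by (simp add: vf_apply_def FD_inverse)
  ultimately show ?thesis
    using lie_scaleR_right[of "suspension v" p "\<lambda>q. inverse (r q)" "\<lambda>q. (0, Z q)"]
      lie_suspension_spatial[OF v Z] Z_frozen v r Z
    by (simp add: suspension_def[abs_def] zero_prod_def)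
qed

lemma vf_apply_suspension:
  fixes f :: "pt \<Rightarrow> real"
  shows "f differentiable (at q) \<Longrightarrow> vf_apply (suspension v) f q = dt f q + v q \<bullet> grad f q"
  by (simp add: vf_apply_def FD_coordinates_real suspension_def)

section \<open>Fields frozen into the flow\<close>

text \<open>With \<open>dv i = \<partial>\<^sub>i v\<close> and \<open>dB i = \<partial>\<^sub>i B\<close>: for divergence-free \<open>v\<close> and \<open>B\<close>,
  \<open>curl (v \<times> B) + (v\<cdot>\<nabla>) B = (B\<cdot>\<nabla>) v\<close>.\<close>

lemma curl_cross_divergence_free:
  fixes v B :: "real^3" and dv dB :: "3 \<Rightarrow> real^3"
  assumes "dv 1 $ 1 + dv 2 $ 2 + dv 3 $ 3 = 0" "dB 1 $ 1 + dB 2 $ 2 + dB 3 $ 3 = 0"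
  shows "vector [(cross3 v (dB 2) + cross3 (dv 2) B) $ 3 - (cross3 v (dB 3) + cross3 (dv 3) B) $ 2,
                 (cross3 v (dB 3) + cross3 (dv 3) B) $ 1 - (cross3 v (dB 1) + cross3 (dv 1) B) $ 3,
                 (cross3 v (dB 1) + cross3 (dv 1) B) $ 2 - (cross3 v (dB 2) + cross3 (dv 2) B) $ 1]
         + (\<Sum>i\<in>UNIV. v $ i *\<^sub>R dB i) = (\<Sum>i\<in>UNIV. B $ i *\<^sub>R dv i)"
proof -
  have 3: "dv 3 $ 3 = - dv 1 $ 1 - dv 2 $ 2" "dB 3 $ 3 = - dB 1 $ 1 - dB 2 $ 2"
    using assms by auto
  show ?thesis
    by (simp add: vec_eq_iff forall_3 sum_3 cross3_def algebra_simps 3)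
qed

text \<open>The cross product of two covectors transported by a divergence-free \<open>v\<close> is a transported
  vector.\<close>

lemma cross_transported_covectors:
  fixes a b :: "real^3" and dv :: "3 \<Rightarrow> real^3"
  assumes "dv 1 $ 1 + dv 2 $ 2 + dv 3 $ 3 = 0"
  shows "cross3 a (\<chi> j. - (dv j \<bullet> b)) + cross3 (\<chi> j. - (dv j \<bullet> a)) b
          = (\<Sum>i\<in>UNIV. cross3 a b $ i *\<^sub>R dv i)"
proof -
  have 3: "dv 3 $ 3 = - dv 1 $ 1 - dv 2 $ 2"
    using assms by auto
  show ?thesis
    by (simp add: vec_eq_iff forall_3 sum_3 cross3_def inner_vec_def algebra_simps 3)
qed

text \<open>With \<open>a = \<nabla>\<phi>\<close>, \<open>b = \<nabla>h\<close>, \<open>\<theta> = \<partial>\<^sub>t h\<close> this is \<open>i(U) \<Omega> = dh\<close>.\<close>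

lemma field_form_U_vector:
  fixes a b v B :: "real^3" and \<theta> :: real
  assumes "B \<bullet> a \<noteq> 0"
  shows "field_form (a + cross3 v B) B (inverse (- (B \<bullet> a)) *\<^sub>R
      ((- (B \<bullet> b)) *\<^sub>R (1, v) + (\<theta> + v \<bullet> b) *\<^sub>R (0, B) + (0, cross3 a b))) w = fst w * \<theta> + snd w \<bullet> b"
proof -
  have "field_form (a + cross3 v B) B ((- (B \<bullet> b)) *\<^sub>R (1, v) + (\<theta> + v \<bullet> b) *\<^sub>R (0, B) + (0, cross3 a b)) w
      = - (B \<bullet> a) * (fst w * \<theta> + snd w \<bullet> b)"
    by (cases w) (simp add: field_form_def inner_vec_def sum_3 cross3_def algebra_simps)
  then show ?thesis
    unfolding field_form_scaleR_left using assms by simp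
qed

locale frozen_in_flow =
  fixes M :: "pt set" and v B :: "pt \<Rightarrow> real^3" and \<phi> :: "pt \<Rightarrow> real"
  assumes open_M: "open M"
    and smooth_v: "smooth_on M v" and smooth_B: "smooth_on M B" and smooth_\<phi>: "smooth_on M \<phi>"
    and divg_v: "\<And>p. p \<in> M \<Longrightarrow> divg v p = 0"
    and divg_B: "\<And>p. p \<in> M \<Longrightarrow> divg B p = 0"
    and induction_eq: "\<And>p. p \<in> M \<Longrightarrow> dt B p - curl (\<lambda>q. cross3 (v q) (B q)) p = 0"
    and \<phi>_conserved: "\<And>p. p \<in> M \<Longrightarrow> dt \<phi> p + v p \<bullet> grad \<phi> p = 0"
    and \<rho>_nonzero: "\<And>p. p \<in> M \<Longrightarrow> - (B p \<bullet> grad \<phi> p) \<noteq> 0"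
begin

abbreviation S :: "pt \<Rightarrow> pt" where
  "S \<equiv> suspension v"

abbreviation \<rho> :: "pt \<Rightarrow> real" where
  "\<rho> \<equiv> \<lambda>p. - (B p \<bullet> grad \<phi> p)"

abbreviation W0 :: "pt \<Rightarrow> pt" where
  "W0 \<equiv> \<lambda>p. (0, inverse (\<rho> p) *\<^sub>R B p)"

abbreviation E :: "pt \<Rightarrow> real^3" where
  "E \<equiv> \<lambda>q. grad \<phi> q + cross3 (v q) (B q)"

lemmas smooth_differentiable = smooth_on_imp_differentiable[OF open_M]

lemma smooth_S: "smooth_on M S"
  by (rule smooth_on_suspension[OF open_M smooth_v])

lemma smooth_\<rho>: "smooth_on M \<rho>"
  by (intro smooth_on_minus[OF open_M] smooth_on_bounded_bilinear[OF bounded_bilinear_inner open_M]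
      smooth_B smooth_on_grad[OF open_M] smooth_\<phi>)

lemma smooth_inverse_\<rho>: "smooth_on M (\<lambda>p. inverse (\<rho> p))"
  by (rule smooth_on_inverse[OF open_M smooth_\<rho> \<rho>_nonzero])

sublocale \<Omega>: closed_field_form M E B
proof
  show "smooth_on M E"
    by (intro smooth_on_add[OF open_M] smooth_on_grad[OF open_M] smooth_\<phi>
        smooth_on_bounded_bilinear[OF bounded_bilinear_cross3 open_M] smooth_v smooth_B)
  show "dt B p = curl E p" if "p \<in> M" for p
    using induction_eq[OF that] curl_grad_add[OF open_M smooth_\<phi> _ that]
      smooth_on_bounded_bilinear[OF bounded_bilinear_cross3 open_M smooth_v smooth_B] by simp
qed (use open_M smooth_B divg_B in auto)

text \<open>Differentiating \<open>\<partial>\<^sub>t f + v\<cdot>\<nabla>f = 0\<close> in \<open>x\<^sub>j\<close>: the gradient of a conserved function is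
  transported as a covector.\<close>

lemma FD_grad_suspension_conserved:
  assumes f: "smooth_on M f" and conserved: "\<And>q. q \<in> M \<Longrightarrow> dt f q + v q \<bullet> grad f q = 0"
    and p: "p \<in> M"
  shows "FD (grad f) p (S p) = (\<chi> j. - (dx j v p \<bullet> grad f p))"
proof -
  have "FD (dx j f) p (S p) = - (dx j v p \<bullet> grad f p)" for j
  proof -
    have "FD (\<lambda>q. FD f q (S q)) p = FD (\<lambda>q. 0) p"
      using conserved vf_apply_suspension[OF smooth_differentiable[OF f]]
      by (intro FD_cong_open[OF open_M p]) (simp add: vf_apply_def)
    then have "0 = FD (\<lambda>q. FD f q (S q)) p (0, axis j 1)"
      by (simp add: FD_const)
    also have "\<dots> = FD f p (FD S p (0, axis j 1)) + FD (\<lambda>r. FD f r (0, axis j 1)) p (S p)"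
      using FD_FD_apply[OF open_M f smooth_S p] smooth_on_FD_FD_commute[OF open_M f p] by simp
    also have "FD S p (0, axis j 1) = (0, dx j v p)"
      by (simp add: FD_suspension[OF smooth_differentiable[OF smooth_v p]] dx_def)
    also have "FD f p (0, dx j v p) = dx j v p \<bullet> grad f p"
      by (simp add: FD_coordinates_real[OF smooth_differentiable[OF f p]])
    also have "FD (\<lambda>r. FD f r (0, axis j 1)) p (S p) = FD (dx j f) p (S p)"
      by (simp add: dx_eq)
    finally show ?thesis by simp
  qed
  then show ?thesis
    by (simp add: FD_grad[OF open_M f p])
qed

lemma FD_v_spatial: "p \<in> M \<Longrightarrow> FD v p (0, z) = (\<Sum>i\<in>UNIV. z $ i *\<^sub>R dx i v p)"
  using FD_coordinates[OF smooth_differentiable[OF smooth_v]] by simp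

lemma divg_v_3: "p \<in> M \<Longrightarrow> dx 1 v p $ 1 + dx 2 v p $ 2 + dx 3 v p $ 3 = 0"
  using divg_v by (simp add: divg_3)

text \<open>By the induction equation, \<open>B\<close> is frozen into the flow: \<open>[\<partial>\<^sub>t + v, B] = 0\<close>.\<close>

lemma FD_B_suspension:
  assumes p: "p \<in> M"
  shows "FD B p (S p) = FD v p (0, B p)"
proof -
  have "FD B p (S p) = dt B p + (\<Sum>i\<in>UNIV. v p $ i *\<^sub>R dx i B p)"
    using FD_coordinates[OF smooth_differentiable[OF smooth_B p], of "S p"]
    by (simp add: suspension_def)
  moreover have "dx i (\<lambda>q. cross3 (v q) (B q)) p = cross3 (v p) (dx i B p) + cross3 (dx i v p) (B p)"
    for i
    unfolding dx_def
    by (rule FD_bounded_bilinear[OF bounded_bilinear_cross3 smooth_differentiable[OF smooth_v p]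
          smooth_differentiable[OF smooth_B p]])
  moreover have "dt B p = curl (\<lambda>q. cross3 (v q) (B q)) p"
    using induction_eq[OF p] by simp
  ultimately show ?thesis
    unfolding FD_v_spatial[OF p]
    using curl_cross_divergence_free[of "\<lambda>i. dx i v p" "\<lambda>i. dx i B p" "v p" "B p"]
      divg_v_3[OF p] divg_B[OF p]
    by (simp add: curl_def divg_3)
qed

lemma vf_apply_S_\<rho>:
  assumes p: "p \<in> M"
  shows "vf_apply S \<rho> p = 0"
proof -
  have "FD \<rho> p (S p) = - (B p \<bullet> FD (grad \<phi>) p (S p) + FD B p (S p) \<bullet> grad \<phi> p)"
    using smooth_differentiable[OF smooth_B p]
      smooth_differentiable[OF smooth_on_grad[OF open_M smooth_\<phi>] p]
    by (simp add: FD_bounded_linear_compose[OF bounded_linear_minus[OF bounded_linear_ident]]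
        differentiable_bounded_bilinear[OF bounded_bilinear_inner]
        FD_bounded_bilinear[OF bounded_bilinear_inner])
  also have "FD (grad \<phi>) p (S p) = (\<chi> j. - (dx j v p \<bullet> grad \<phi> p))"
    by (rule FD_grad_suspension_conserved[OF smooth_\<phi> \<phi>_conserved p])
  also have "FD B p (S p) = (\<Sum>i\<in>UNIV. B p $ i *\<^sub>R dx i v p)"
    unfolding FD_B_suspension[OF p] by (rule FD_v_spatial[OF p])
  also have "- (B p \<bullet> (\<chi> j. - (dx j v p \<bullet> grad \<phi> p)) + (\<Sum>i\<in>UNIV. B p $ i *\<^sub>R dx i v p) \<bullet> grad \<phi> p) = 0"
    by (simp add: inner_vec_def sum_3 algebra_simps)
  finally show ?thesis
    by (simp add: vf_apply_def)
qed

lemma FD_cross_grad_suspension: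
  assumes h: "smooth_on M h" and conserved: "\<And>q. q \<in> M \<Longrightarrow> dt h q + v q \<bullet> grad h q = 0"
    and p: "p \<in> M"
  shows "FD (\<lambda>q. cross3 (grad \<phi> q) (grad h q)) p (S p) = FD v p (0, cross3 (grad \<phi> p) (grad h p))"
proof -
  have "FD (\<lambda>q. cross3 (grad \<phi> q) (grad h q)) p (S p)
      = cross3 (grad \<phi> p) (FD (grad h) p (S p)) + cross3 (FD (grad \<phi>) p (S p)) (grad h p)"
    by (rule FD_bounded_bilinear[OF bounded_bilinear_cross3
          smooth_differentiable[OF smooth_on_grad[OF open_M smooth_\<phi>] p]
          smooth_differentiable[OF smooth_on_grad[OF open_M h] p]])
  also have "FD (grad h) p (S p) = (\<chi> j. - (dx j v p \<bullet> grad h p))"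
    by (rule FD_grad_suspension_conserved[OF h conserved p])
  also have "FD (grad \<phi>) p (S p) = (\<chi> j. - (dx j v p \<bullet> grad \<phi> p))"
    by (rule FD_grad_suspension_conserved[OF smooth_\<phi> \<phi>_conserved p])
  also have "cross3 (grad \<phi> p) (\<chi> j. - (dx j v p \<bullet> grad h p))
      + cross3 (\<chi> j. - (dx j v p \<bullet> grad \<phi> p)) (grad h p)
      = FD v p (0, cross3 (grad \<phi> p) (grad h p))"
    unfolding FD_v_spatial[OF p] by (rule cross_transported_covectors[OF divg_v_3[OF p]])
  finally show ?thesis .
qed

lemma smooth_W0: "smooth_on M W0"
  by (intro smooth_on_Pair[OF open_M] smooth_on_const
      smooth_on_bounded_bilinear[OF bounded_bilinear_scaleR open_M] smooth_inverse_\<rho> smooth_B)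

lemma smooth_U_field:
  assumes h: "smooth_on M h"
  shows "smooth_on M (U_field \<phi> v B h)"
proof -
  have "U_field \<phi> v B h = (\<lambda>p. inverse (\<rho> p) *\<^sub>R ((- (B p \<bullet> grad h p)) *\<^sub>R S p
      + (dt h p + v p \<bullet> grad h p) *\<^sub>R (0, B p) + (0, cross3 (grad \<phi> p) (grad h p))))"
    by (rule ext) (simp add: U_field_def Let_def)
  then show ?thesis
    by (simp only:) (intro smooth_on_bounded_bilinear[OF bounded_bilinear_scaleR open_M]
        smooth_on_add[OF open_M] smooth_on_minus[OF open_M] smooth_on_Pair[OF open_M]
        smooth_on_bounded_bilinear[OF bounded_bilinear_inner open_M]
        smooth_on_bounded_bilinear[OF bounded_bilinear_cross3 open_M] smooth_on_grad[OF open_M]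
        smooth_inverse_\<rho> smooth_S smooth_B smooth_v smooth_\<phi> h smooth_on_dt smooth_on_const)
qed

lemma W0_hamiltonian: "hamiltonian_with M (Omega \<phi> v B) W0 fst"
  unfolding hamiltonian_with_def
proof (intro ballI allI)
  fix p w
  assume "p \<in> M"
  then have "B p \<bullet> grad \<phi> p \<noteq> 0"
    using \<rho>_nonzero by simp
  then show "Omega \<phi> v B p (W0 p) w = FD fst p w"
    by (simp add: Omega_eq_field_form field_form_def FD_bounded_linear[OF bounded_linear_fst]
        inner_add_left dot_cross_self cross_mult_left inner_commute[of "grad \<phi> p"] field_simps)
qed

lemma U_field_hamiltonian:
  assumes h: "smooth_on M h"
  shows "hamiltonian_with M (Omega \<phi> v B) (U_field \<phi> v B h) h"
  unfolding hamiltonian_with_def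
proof (intro ballI allI)
  fix p w
  assume p: "p \<in> M"
  then have "B p \<bullet> grad \<phi> p \<noteq> 0"
    using \<rho>_nonzero by simp
  then show "Omega \<phi> v B p (U_field \<phi> v B h p) w = FD h p w"
    unfolding Omega_eq_field_form U_field_def Let_def suspension_def
      FD_coordinates_real[OF smooth_differentiable[OF h p]]
    by (rule field_form_U_vector)
qed

lemma inf_symmetry_W0: "inf_symmetry M v W0"
proof (rule inf_symmetryI)
  show "lie S W0 p = 0 *\<^sub>R S p" if "p \<in> M" for p
    using lie_suspension_scaled_spatial_eq_0[OF smooth_differentiable[OF smooth_v that]
        smooth_differentiable[OF smooth_\<rho> that] \<rho>_nonzero[OF that]
        smooth_differentiable[OF smooth_B that]
        vf_apply_S_\<rho>[OF that] FD_B_suspension[OF that]]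
    by simp
qed (use smooth_differentiable smooth_v smooth_W0 in blast)+

text \<open>For conserved \<open>h\<close> the field \<open>U\<close> is a multiple of \<open>\<partial>\<^sub>t + v\<close> plus the frozen-in field
  \<open>\<rho>\<^sup>-\<^sup>1 \<nabla>\<phi> \<times> \<nabla>h\<close>.\<close>

lemma inf_symmetry_U_field:
  assumes h: "smooth_on M h" and conserved: "\<And>q. q \<in> M \<Longrightarrow> dt h q + v q \<bullet> grad h q = 0"
  shows "inf_symmetry M v (U_field \<phi> v B h)"
proof -
  define f where "f q = inverse (\<rho> q) * - (B q \<bullet> grad h q)" for q
  define N where "N q = cross3 (grad \<phi> q) (grad h q)" for q
  define Y where "Y q = (0::real, inverse (\<rho> q) *\<^sub>R N q)" for q
  have U: "U_field \<phi> v B h q = f q *\<^sub>R S q + Y q" if "q \<in> M" for q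
    using conserved[OF that]
    by (simp add: U_field_def Let_def f_def Y_def N_def suspension_def algebra_simps)
  have N: "smooth_on M N"
    unfolding N_def
    by (intro smooth_on_bounded_bilinear[OF bounded_bilinear_cross3 open_M] smooth_on_grad[OF open_M]
        smooth_\<phi> h)
  have f: "smooth_on M f"
    unfolding f_def
    by (intro smooth_on_bounded_bilinear[OF bounded_bilinear_mult open_M] smooth_inverse_\<rho>
        smooth_on_minus[OF open_M] smooth_on_bounded_bilinear[OF bounded_bilinear_inner open_M]
        smooth_B smooth_on_grad[OF open_M] h)
  have Y: "smooth_on M Y"
    unfolding Y_def
    by (intro smooth_on_Pair[OF open_M] smooth_on_const
        smooth_on_bounded_bilinear[OF bounded_bilinear_scaleR open_M] smooth_inverse_\<rho> N)
  show ?thesis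
  proof (rule inf_symmetryI)
    fix p
    assume p: "p \<in> M"
    have "lie S Y p = 0"
      unfolding Y_def
      by (rule lie_suspension_scaled_spatial_eq_0[OF smooth_differentiable[OF smooth_v p]
            smooth_differentiable[OF smooth_\<rho> p] \<rho>_nonzero[OF p] smooth_differentiable[OF N p]
            vf_apply_S_\<rho>[OF p]])
        (simp add: N_def[abs_def] FD_cross_grad_suspension[OF h conserved p])
    moreover have "lie S (U_field \<phi> v B h) p = lie S (\<lambda>q. f q *\<^sub>R S q + Y q) p"
      using U by (intro lie_cong_open[OF open_M p]) simp_all
    ultimately show "lie S (U_field \<phi> v B h) p = vf_apply S f p *\<^sub>R S p"
      using smooth_differentiable[OF smooth_S p] smooth_differentiable[OF f p]
        smooth_differentiable[OF Y p]
      by (simp add: lie_add_right lie_scaleR_right lie_suspension_suspension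
          differentiable_bounded_bilinear[OF bounded_bilinear_scaleR])
  qed (use smooth_differentiable smooth_v smooth_U_field[OF h] in blast)+
qed

lemma W_seq_hamiltonian_inf_symmetry:
  assumes h: "smooth_on M h" and conserved: "\<And>q. q \<in> M \<Longrightarrow> dt h q + v q \<bullet> grad h q = 0"
  shows "smooth_on M (W_seq W0 (U_field \<phi> v B h) n)
    \<and> hamiltonian_vf M (Omega \<phi> v B) (W_seq W0 (U_field \<phi> v B h) n)
    \<and> inf_symmetry M v (W_seq W0 (U_field \<phi> v B h) n)"
proof (induction n)
  case 0
  show ?case
    using smooth_W0 W0_hamiltonian inf_symmetry_W0 smooth_on_bounded_linear[OF bounded_linear_fst]
    by (auto simp: hamiltonian_vf_def)
next
  case (Suc n)
  let ?W = "W_seq W0 (U_field \<phi> v B h) n"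
  from Suc obtain g where W: "smooth_on M ?W" and g: "smooth_on M g"
    and H: "hamiltonian_with M (Omega \<phi> v B) ?W g" and SW: "inf_symmetry M v ?W"
    by (auto simp: hamiltonian_vf_def)
  have "hamiltonian_with M (Omega \<phi> v B) (lie ?W (U_field \<phi> v B h)) (vf_apply ?W h)"
    using \<Omega>.hamiltonian_with_lie[OF W smooth_U_field[OF h] g h] H U_field_hamiltonian[OF h]
    by (simp add: Omega_eq_field_form)
  then show ?case
    using smooth_on_lie[OF open_M W smooth_U_field[OF h]] smooth_on_vf_apply[OF open_M h W]
      inf_symmetry_lie[OF open_M smooth_v W smooth_U_field[OF h] SW
        inf_symmetry_U_field[OF h conserved]]
    by (auto simp: hamiltonian_vf_def)
qed

lemma lie_deriv2_Omega_eq_0: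
  assumes X: "smooth_on M X" and H: "hamiltonian_vf M (Omega \<phi> v B) X" and p: "p \<in> M"
  shows "lie_deriv2 X (Omega \<phi> v B) p x y = 0"
proof -
  obtain f where "smooth_on M f" "hamiltonian_with M (Omega \<phi> v B) X f"
    using H unfolding hamiltonian_vf_def by blast
  then show ?thesis
    unfolding Omega_eq_field_form by (rule \<Omega>.lie_deriv2_hamiltonian_eq_0[OF X _ _ p])
qed

end

theorem proposition2:
  fixes D :: "(real^3) set"
    and v B :: "pt \<Rightarrow> real^3"
    and \<phi> :: "pt \<Rightarrow> real"
  defines "M \<equiv> (UNIV :: real set) \<times> D"
  defines "\<rho> \<equiv> (\<lambda>p. - (B p \<bullet> grad \<phi> p))"
  defines "W0 \<equiv> (\<lambda>p. (0, inverse (\<rho> p) *\<^sub>R B p))"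
  assumes D_open: "open D" and D_sc: "simply_connected D"
    and v_smooth: "smooth_on M v" and B_smooth: "smooth_on M B" and \<phi>_smooth: "smooth_on M \<phi>"
    and v_div: "\<forall>p\<in>M. divg v p = 0"
    and B_div: "\<forall>p\<in>M. divg B p = 0"
    and B_eq: "\<forall>p\<in>M. dt B p - curl (\<lambda>q. cross3 (v q) (B q)) p = 0"
    and \<phi>_eq: "\<forall>p\<in>M. dt \<phi> p + v p \<bullet> grad \<phi> p = 0"
    and \<rho>_nz: "\<forall>p\<in>M. \<rho> p \<noteq> 0"
  shows
    "(\<forall>h. smooth_on M h \<longrightarrow> hamiltonian_with M (Omega \<phi> v B) (U_field \<phi> v B h) h)
     \<and> hamiltonian_with M (Omega \<phi> v B) W0 fst
     \<and> inf_symmetry M v W0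
     \<and> (\<forall>h. smooth_on M h \<longrightarrow> (\<forall>p\<in>M. dt h p + v p \<bullet> grad h p = 0) \<longrightarrow>
          inf_symmetry M v (U_field \<phi> v B h)
          \<and> (\<forall>n. hamiltonian_vf M (Omega \<phi> v B) (W_seq W0 (U_field \<phi> v B h) n)
                 \<and> (\<forall>p\<in>M. \<forall>x y. lie_deriv2 (W_seq W0 (U_field \<phi> v B h) n) (Omega \<phi> v B) p x y = 0)
                 \<and> inf_symmetry M v (W_seq W0 (U_field \<phi> v B h) n)))"
proof -
  have "open M"
    unfolding M_def using D_open by (simp add: open_Times)
  interpret frozen_in_flow M v B \<phi>
    using \<open>open M\<close> v_smooth B_smooth \<phi>_smooth v_div B_div B_eq \<phi>_eq \<rho>_nz
    by unfold_locales (auto simp: \<rho>_def)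
  show ?thesis
    unfolding W0_def \<rho>_def
    using U_field_hamiltonian W0_hamiltonian inf_symmetry_W0 inf_symmetry_U_field
      W_seq_hamiltonian_inf_symmetry lie_deriv2_Omega_eq_0
    by simp
qed

end
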